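(* Let $M_k$ be a Bott tower with non-negative Bott numbers $c_{i,j}\ge 0$. Every nef and big divisor on $M_k$ is ample if and only if $c_{i,j}=0$ for all $1\le i<j\le k$.
   Context: Given integers $c_{i,j}$ ($1\le i<j\le k$) (Bott numbers), let $e_1,\dots,e_k$ be the standard basis of $\mathbb{Z}^k$. The Bott tower $M_k$ is the nonsingular projective toric variety whose fan has the $2k$ rays generated by $v_i=e_i$ ($1\le i\le k$), $v_{k+i}=-e_i+c_{i,i+1}e_{i+1}+\cdots+c_{i,k}e_k$ ($1\le i\le k-1$), $v_{2k}=-e_k$, and whose maximal cones are the $2^k$ cones generated by $k$ of these vectors containing, for each $i$, exactly one of $v_i,v_{k+i}$. *)

theory Defs
  imports Complex_Main
begin

text \<open>Rays are indexed by 1..2k; vectors in Z^k are functions nat => int on coordinates 1..k.\<close>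

definition bott_ray :: "(nat \<Rightarrow> nat \<Rightarrow> int) \<Rightarrow> nat \<Rightarrow> nat \<Rightarrow> nat \<Rightarrow> int" where
  "bott_ray c k i j =
     (if i \<le> k then (if j = i then 1 else 0)
      else (let l = i - k in
            if j = l then -1 else if l < j \<and> j \<le> k then c l j else 0))"

text \<open>Maximal cone indexed by S subset {1..k}: uses v_(k+i) for i in S and v_i for i not in S.\<close>
definition bott_cone :: "nat \<Rightarrow> nat set \<Rightarrow> nat set" where
  "bott_cone k S = ({1..k} - S) \<union> ((\<lambda>i. k + i) ` S)"

definition bott_pair :: "(nat \<Rightarrow> nat \<Rightarrow> int) \<Rightarrow> nat \<Rightarrow> (nat \<Rightarrow> real) \<Rightarrow> nat \<Rightarrow> real" where
  "bott_pair c k m i = (\<Sum>j = 1..k. m j * of_int (bott_ray c k i j))"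

text \<open>A torus-invariant divisor D = sum_(i=1..2k) a i D_i (every divisor class has such a
  representative). Nef / ample: the (Cartier) support function is convex / strictly convex;
  i.e. for every maximal cone sigma the local datum m_sigma (with <m_sigma,v_i> = -a_i for
  v_i in sigma) satisfies <m_sigma,v_i> >= -a_i (resp. > -a_i for v_i not in sigma) for all rays.
  Big: the polytope P_D = {m. <m,v_i> >= -a_i for all i} is full-dimensional.\<close>

definition bott_nef :: "(nat \<Rightarrow> nat \<Rightarrow> int) \<Rightarrow> nat \<Rightarrow> (nat \<Rightarrow> int) \<Rightarrow> bool" where
  "bott_nef c k a \<longleftrightarrow> (\<forall>S\<subseteq>{1..k}. \<exists>m.
      (\<forall>i\<in>bott_cone k S. bott_pair c k m i = - of_int (a i)) \<and>
      (\<forall>i\<in>{1..2*k}. bott_pair c k m i \<ge> - of_int (a i)))"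

definition bott_ample :: "(nat \<Rightarrow> nat \<Rightarrow> int) \<Rightarrow> nat \<Rightarrow> (nat \<Rightarrow> int) \<Rightarrow> bool" where
  "bott_ample c k a \<longleftrightarrow> (\<forall>S\<subseteq>{1..k}. \<exists>m.
      (\<forall>i\<in>bott_cone k S. bott_pair c k m i = - of_int (a i)) \<and>
      (\<forall>i\<in>{1..2*k} - bott_cone k S. bott_pair c k m i > - of_int (a i)))"

definition bott_big :: "(nat \<Rightarrow> nat \<Rightarrow> int) \<Rightarrow> nat \<Rightarrow> (nat \<Rightarrow> int) \<Rightarrow> bool" where
  "bott_big c k a \<longleftrightarrow> (\<exists>m. \<forall>i\<in>{1..2*k}. bott_pair c k m i > - of_int (a i))"

end

theory Submission
  imports Defs
begin

text \<open>If all Bott numbers vanish, \<open>M\<^sub>k\<close> is \<open>(\<P>\<^sup>1)\<^sup>k\<close> and the ray \<open>v\<^sub>k\<^sub>+\<^sub>l\<close> is \<open>-v\<^sub>l\<close>. Bigness of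
  \<open>D = \<Sum> a\<^sub>i D\<^sub>i\<close> then means \<open>a\<^sub>l + a\<^sub>k\<^sub>+\<^sub>l > 0\<close> for every \<open>l\<close>, which is already ampleness.
  Conversely, if \<open>c\<^sub>p\<^sub>q > 0\<close>, take \<open>D = \<Sum>\<^sub>l\<^sub>\<noteq>\<^sub>p D\<^sub>k\<^sub>+\<^sub>l\<close>. It is nef because on every maximal cone
  the local datum is obtained by back substitution in a unitriangular system with
  non-negative entries, hence is non-negative; it is big because \<open>c\<^sub>p\<^sub>q > 0\<close> gives a
  positive \<open>m\<close> with \<open>\<langle>m, v\<^sub>k\<^sub>+\<^sub>p\<rangle> > 0\<close>; but it is not ample, since on the cone
  spanned by \<open>e\<^sub>1, \<dots>, e\<^sub>k\<close> the local datum is \<open>0\<close>, which vanishes on \<open>v\<^sub>k\<^sub>+\<^sub>p\<close> too.\<close>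

lemma bott_pair_lower:
  assumes "1 \<le> i" "i \<le> k"
  shows "bott_pair c k m i = m i"
proof -
  have "bott_pair c k m i = (\<Sum>j = 1..k. if j = i then m j else 0)"
    unfolding bott_pair_def bott_ray_def using assms by (intro sum.cong) auto
  also have "\<dots> = m i" using assms by (simp add: sum.delta)
  finally show ?thesis .
qed

lemma bott_pair_upper:
  assumes "1 \<le> l" "l \<le> k"
  shows "bott_pair c k m (k + l) = - m l + (\<Sum>j\<in>{l<..k}. m j * of_int (c l j))"
proof -
  have "bott_pair c k m (k + l) = (\<Sum>j = 1..k. (if j = l then - m j else 0)
          + (if l < j then m j * of_int (c l j) else 0))"
    unfolding bott_pair_def bott_ray_def using assms by (intro sum.cong) auto
  also have "\<dots> = - m l + (\<Sum>j = 1..k. if l < j then m j * of_int (c l j) else 0)"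
    using assms by (simp add: sum.distrib sum.delta)
  also have "(\<Sum>j = 1..k. if l < j then m j * of_int (c l j) else 0)
     = (\<Sum>j\<in>{j\<in>{1..k}. l < j}. m j * of_int (c l j))"
    by (rule sum.inter_filter[symmetric]) simp
  also have "{j\<in>{1..k}. l < j} = {l<..k}" using assms by auto
  finally show ?thesis .
qed

lemma bott_pair_upper_trivial:
  assumes "1 \<le> l" "l \<le> k" "\<forall>i j. 1 \<le> i \<and> i < j \<and> j \<le> k \<longrightarrow> c i j = 0"
  shows "bott_pair c k m (k + l) = - m l"
proof -
  have "(\<Sum>j\<in>{l<..k}. m j * of_int (c l j)) = 0"
    using assms by (intro sum.neutral) auto
  then show ?thesis using bott_pair_upper[OF assms(1,2)] by simp
qed

lemma bott_pair_upper_nonneg_sum: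
  fixes m :: "nat \<Rightarrow> real"
  assumes "1 \<le> l" "\<forall>i j. 1 \<le> i \<and> i < j \<and> j \<le> k \<longrightarrow> c i j \<ge> 0" "\<forall>j. m j \<ge> 0"
  shows "(\<Sum>j\<in>{l<..k}. m j * of_int (c l j)) \<ge> 0"
  using assms by (intro sum_nonneg) auto

lemma bott_ray_index_cases:
  assumes "(i::nat) \<in> {1..2*k}"
  obtains "1 \<le> i" "i \<le> k" | l where "i = k + l" "1 \<le> l" "l \<le> k"
proof (cases "i \<le> k")
  case True
  then show ?thesis using assms that(1) by auto
next
  case False
  then have "i = k + (i - k)" "1 \<le> i - k" "i - k \<le> k" using assms by auto
  then show ?thesis using that(2) by blast
qed

lemma bott_cone_iff:
  assumes "S \<subseteq> {1..k}"
  shows "i \<in> bott_cone k S \<longleftrightarrow> (1 \<le> i \<and> i \<le> k \<and> i \<notin> S) \<or> (\<exists>l\<in>S. i = k + l)"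
  using assms unfolding bott_cone_def by auto

lemma bott_big_trivial_imp_pos:
  assumes "\<forall>i j. 1 \<le> i \<and> i < j \<and> j \<le> k \<longrightarrow> c i j = 0" "bott_big c k a" "1 \<le> l" "l \<le> k"
  shows "a l + a (k + l) > 0"
proof -
  obtain m where m: "\<forall>i\<in>{1..2*k}. bott_pair c k m i > - of_int (a i)"
    using assms(2) unfolding bott_big_def by blast
  have "m l > - of_int (a l)"
    using m[rule_format, of l] assms(3,4) bott_pair_lower[of l k c m] by simp
  moreover have "- m l > - of_int (a (k + l))"
    using m[rule_format, of "k + l"] assms(3,4) bott_pair_upper_trivial[OF assms(3,4,1)] by simp
  ultimately show ?thesis by linarith
qed

lemma bott_ample_if_trivial_pos:
  assumes z: "\<forall>i j. 1 \<le> i \<and> i < j \<and> j \<le> k \<longrightarrow> c i j = 0"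
    and pos: "\<And>l. 1 \<le> l \<Longrightarrow> l \<le> k \<Longrightarrow> a l + a (k + l) > 0"
  shows "bott_ample c k a"
  unfolding bott_ample_def
proof (intro allI impI)
  fix S assume S: "S \<subseteq> {1..k}"
  define m where "m = (\<lambda>j. if j \<in> S then real_of_int (a (k + j)) else - of_int (a j))"
  show "\<exists>m. (\<forall>i\<in>bott_cone k S. bott_pair c k m i = - of_int (a i)) \<and>
    (\<forall>i\<in>{1..2*k} - bott_cone k S. bott_pair c k m i > - of_int (a i))"
  proof (intro exI conjI ballI)
    fix i assume "i \<in> bott_cone k S"
    then consider "1 \<le> i" "i \<le> k" "i \<notin> S" | l where "l \<in> S" "i = k + l"
      using bott_cone_iff[OF S] by blast
    then show "bott_pair c k m i = - of_int (a i)"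
    proof cases
      case 1
      then show ?thesis using bott_pair_lower[of i k c m] by (simp add: m_def)
    next
      case 2
      then have "1 \<le> l" "l \<le> k" using S by auto
      then show ?thesis using bott_pair_upper_trivial[OF _ _ z, of l m] 2 by (simp add: m_def)
    qed
  next
    fix i assume "i \<in> {1..2*k} - bott_cone k S"
    then have i: "i \<in> {1..2*k}" and not_cone: "i \<notin> bott_cone k S" by auto
    from i show "bott_pair c k m i > - of_int (a i)"
    proof (cases rule: bott_ray_index_cases)
      case 1
      then have "i \<in> S" using not_cone bott_cone_iff[OF S] by blast
      then show ?thesis using bott_pair_lower[OF 1, of c m] pos[OF 1] by (simp add: m_def)
    next
      case (2 l)
      then have "l \<notin> S" using not_cone bott_cone_iff[OF S] by blast
      then show ?thesis using bott_pair_upper_trivial[OF 2(2,3) z, of m] pos[OF 2(2,3)] 2(1)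
        by (simp add: m_def)
    qed
  qed
qed

lemma bott_ample_if_trivial_big:
  assumes "\<forall>i j. 1 \<le> i \<and> i < j \<and> j \<le> k \<longrightarrow> c i j = 0" "bott_big c k a"
  shows "bott_ample c k a"
  using bott_ample_if_trivial_pos[OF assms(1)] bott_big_trivial_imp_pos[OF assms] by blast

definition upper_ray_divisor :: "nat \<Rightarrow> (nat \<Rightarrow> int) \<Rightarrow> nat \<Rightarrow> int" where
  "upper_ray_divisor k b i = (if k < i then b (i - k) else 0)"

lemma upper_ray_divisor_lower: "i \<le> k \<Longrightarrow> upper_ray_divisor k b i = 0"
  by (simp add: upper_ray_divisor_def)

lemma upper_ray_divisor_upper: "1 \<le> l \<Longrightarrow> upper_ray_divisor k b (k + l) = b l"
  by (simp add: upper_ray_divisor_def)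

text \<open>Local datum of \<open>\<Sum> b\<^sub>l D\<^sub>k\<^sub>+\<^sub>l\<close> on the maximal cone indexed by \<open>S\<close>, solved from \<open>m\<^sub>k\<close> downwards.\<close>

function back_subst :: "(nat \<Rightarrow> nat \<Rightarrow> int) \<Rightarrow> nat \<Rightarrow> nat set \<Rightarrow> (nat \<Rightarrow> int) \<Rightarrow> nat \<Rightarrow> real" where
  "back_subst c k S b i = (if i \<in> S \<and> 1 \<le> i \<and> i \<le> k
     then of_int (b i) + (\<Sum>j\<in>{i<..k}. back_subst c k S b j * of_int (c i j)) else 0)"
  by auto
termination
  by (relation "measure (\<lambda>(c, k, S, b, i). k - i)") auto

declare back_subst.simps[simp del]

lemma back_subst_nonneg:
  "(\<forall>i j. 1 \<le> i \<and> i < j \<and> j \<le> k \<longrightarrow> c i j \<ge> 0) \<Longrightarrow> (\<forall>l. b l \<ge> 0) \<Longrightarrow>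
    back_subst c k S b i \<ge> 0"
proof (induction c k S b i rule: back_subst.induct)
  case (1 c k S b i)
  show ?case
  proof (cases "i \<in> S \<and> 1 \<le> i \<and> i \<le> k")
    case True
    have "(\<Sum>j\<in>{i<..k}. back_subst c k S b j * of_int (c i j)) \<ge> 0"
      using 1 True by (intro sum_nonneg mult_nonneg_nonneg) auto
    then show ?thesis using True 1(3) back_subst.simps[of c k S b i] by simp
  next
    case False
    then show ?thesis by (subst back_subst.simps) auto
  qed
qed

lemma back_subst_outside: "i \<notin> S \<Longrightarrow> back_subst c k S b i = 0"
  by (simp add: back_subst.simps)

lemma bott_pair_upper_back_subst:
  assumes "S \<subseteq> {1..k}" "l \<in> S"
  shows "bott_pair c k (back_subst c k S b) (k + l) = - b l"
proof -
  have "1 \<le> l" "l \<le> k" using assms by auto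
  then show ?thesis
    using bott_pair_upper[of l k c "back_subst c k S b"] back_subst.simps[of c k S b l] assms(2)
    by simp
qed

lemma bott_nef_upper_ray_divisor:
  assumes nn: "\<forall>i j. 1 \<le> i \<and> i < j \<and> j \<le> k \<longrightarrow> c i j \<ge> 0" and b: "\<forall>l. b l \<ge> 0"
  shows "bott_nef c k (upper_ray_divisor k b)"
  unfolding bott_nef_def
proof (intro allI impI)
  fix S assume S: "S \<subseteq> {1..k}"
  define m where "m = back_subst c k S b"
  have m_nonneg: "\<forall>j. m j \<ge> 0" unfolding m_def using back_subst_nonneg[OF nn b] by blast
  have m_outside: "m j = 0" if "j \<notin> S" for j
    using back_subst_outside[OF that] by (simp add: m_def)
  have m_inside: "bott_pair c k m (k + l) = - b l" if "l \<in> S" for l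
    using bott_pair_upper_back_subst[OF S that] by (simp add: m_def)
  show "\<exists>m. (\<forall>i\<in>bott_cone k S. bott_pair c k m i = - of_int (upper_ray_divisor k b i)) \<and>
    (\<forall>i\<in>{1..2*k}. bott_pair c k m i \<ge> - of_int (upper_ray_divisor k b i))"
  proof (intro exI conjI ballI)
    fix i assume "i \<in> bott_cone k S"
    then consider "1 \<le> i" "i \<le> k" "i \<notin> S" | l where "l \<in> S" "i = k + l"
      using bott_cone_iff[OF S] by blast
    then show "bott_pair c k m i = - of_int (upper_ray_divisor k b i)"
    proof cases
      case 1
      then show ?thesis using bott_pair_lower[of i k c m] m_outside upper_ray_divisor_lower by simp
    next
      case 2
      then show ?thesis using S m_inside upper_ray_divisor_upper by auto
    qed
  next
    fix i assume "i \<in> {1..2*k}"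
    then show "bott_pair c k m i \<ge> - of_int (upper_ray_divisor k b i)"
    proof (cases rule: bott_ray_index_cases)
      case 1
      then show ?thesis
        using bott_pair_lower[OF 1, of c m] m_nonneg upper_ray_divisor_lower by simp
    next
      case (2 l)
      have "bott_pair c k m (k + l) \<ge> - b l"
      proof (cases "l \<in> S")
        case True
        then show ?thesis using m_inside by simp
      next
        case False
        then show ?thesis
          using bott_pair_upper[OF 2(2,3), of c m] m_outside b[rule_format, of l]
            bott_pair_upper_nonneg_sum[OF 2(2) nn m_nonneg] by simp
      qed
      then show ?thesis using 2 upper_ray_divisor_upper by simp
    qed
  qed
qed

lemma bott_big_upper_ray_divisor:
  assumes nn: "\<forall>i j. 1 \<le> i \<and> i < j \<and> j \<le> k \<longrightarrow> c i j \<ge> 0"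
    and pq: "1 \<le> p" "p < q" "q \<le> k" "c p q \<noteq> 0"
    and b: "\<forall>l. b l \<ge> 0" "\<forall>l. l \<noteq> p \<longrightarrow> b l > 0"
  shows "bott_big c k (upper_ray_divisor k b)"
  unfolding bott_big_def
proof (intro exI ballI)
  define m :: "nat \<Rightarrow> real" where "m = (\<lambda>j. if j = p then 1/4 else 1/2)"
  have m_nonneg: "\<forall>j. m j \<ge> 0" by (simp add: m_def)
  have m_p: "m p = 1/4" and m_q: "m q = 1/2" and m_other: "\<And>l. l \<noteq> p \<Longrightarrow> m l = 1/2"
    using pq by (simp_all add: m_def)
  fix i assume "i \<in> {1..2*k}"
  then show "bott_pair c k m i > - of_int (upper_ray_divisor k b i)"
  proof (cases rule: bott_ray_index_cases)
    case 1
    then show ?thesis using bott_pair_lower[OF 1, of c m] upper_ray_divisor_lower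
      by (simp add: m_def)
  next
    case (2 l)
    have "bott_pair c k m (k + l) > - b l"
    proof (cases "l = p")
      case True
      have "c p q \<ge> 1" using nn pq by force
      then have "1/2 \<le> m q * of_int (c p q)" unfolding m_q by linarith
      also have "\<dots> \<le> (\<Sum>j\<in>{p<..k}. m j * of_int (c p j))"
        using pq nn m_nonneg by (intro member_le_sum) auto
      finally show ?thesis
        using bott_pair_upper[OF 2(2,3), of c m] True m_p b(1)[rule_format, of p] by simp
    next
      case False
      then have "b l \<ge> 1" using b(2) by force
      then show ?thesis
        using bott_pair_upper[OF 2(2,3), of c m] m_other[OF False]
          bott_pair_upper_nonneg_sum[OF 2(2) nn m_nonneg] by simp
    qed
    then show ?thesis using 2 upper_ray_divisor_upper by simp
  qed
qed

lemma bott_ample_upper_ray_divisor_imp_pos: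
  assumes "bott_ample c k (upper_ray_divisor k b)" "1 \<le> l" "l \<le> k"
  shows "b l > 0"
proof -
  have cone: "bott_cone k {} = {1..k}" by (simp add: bott_cone_def)
  obtain m where
    m_cone: "\<forall>i\<in>{1..k}. bott_pair c k m i = - of_int (upper_ray_divisor k b i)" and
    m_strict: "\<forall>i\<in>{1..2*k} - {1..k}. bott_pair c k m i > - of_int (upper_ray_divisor k b i)"
    using assms(1) cone unfolding bott_ample_def by force
  have m_zero: "m j = 0" if "1 \<le> j" "j \<le> k" for j
    using m_cone bott_pair_lower[OF that, of c m] upper_ray_divisor_lower[OF that(2)] that by auto
  have "(\<Sum>j\<in>{l<..k}. m j * of_int (c l j)) = 0"
    using assms(2) m_zero by (intro sum.neutral) auto
  then have "bott_pair c k m (k + l) = 0"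
    using bott_pair_upper[OF assms(2,3), of c m] m_zero[OF assms(2,3)] by simp
  moreover have "bott_pair c k m (k + l) > - of_int (upper_ray_divisor k b (k + l))"
    using m_strict assms(2,3) by simp
  ultimately show ?thesis using upper_ray_divisor_upper[OF assms(2)] by simp
qed

theorem corollary3p10:
  fixes c :: "nat \<Rightarrow> nat \<Rightarrow> int" and k :: nat
  assumes "\<forall>i j. 1 \<le> i \<and> i < j \<and> j \<le> k \<longrightarrow> c i j \<ge> 0"
  shows "(\<forall>a. bott_nef c k a \<and> bott_big c k a \<longrightarrow> bott_ample c k a) \<longleftrightarrow>
         (\<forall>i j. 1 \<le> i \<and> i < j \<and> j \<le> k \<longrightarrow> c i j = 0)"
proof
  assume nef_big_ample: "\<forall>a. bott_nef c k a \<and> bott_big c k a \<longrightarrow> bott_ample c k a"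
  show "\<forall>i j. 1 \<le> i \<and> i < j \<and> j \<le> k \<longrightarrow> c i j = 0"
  proof (intro allI impI, rule ccontr)
    fix p q assume pq: "1 \<le> p \<and> p < q \<and> q \<le> k" "c p q \<noteq> 0"
    define b where "b = (\<lambda>l. if l = p then 0 else 1 :: int)"
    have "bott_ample c k (upper_ray_divisor k b)"
      using nef_big_ample bott_nef_upper_ray_divisor[OF assms, of b]
        bott_big_upper_ray_divisor[OF assms, of p q b] pq by (simp add: b_def)
    then show False
      using bott_ample_upper_ray_divisor_imp_pos[of c k b p] pq by (simp add: b_def)
  qed
next
  assume "\<forall>i j. 1 \<le> i \<and> i < j \<and> j \<le> k \<longrightarrow> c i j = 0"
  then show "\<forall>a. bott_nef c k a \<and> bott_big c k a \<longrightarrow> bott_ample c k a"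
    using bott_ample_if_trivial_big by blast
qed

end
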